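(* Let $n\ge1$ and $\mathbf{P}_A,\mathbf{P}_B,\mathbf{Q}_A,\mathbf{Q}_B\in\mathbb{R}^{n\times n}$ be symmetric positive definite. Let $\mathbf{x}\in\mathbb{R}^n$, $\mathbf{x}\neq\mathbf{0}$. The following three cases are mutually exclusive and collectively exhaustive: (1) $\mathbf{x}^\intercal\mathbf{H}_{\mathrm{SCI}}'(0)\mathbf{x}<0$; in this case $g(\mathbf{x})=\mathbf{x}^\intercal\mathbf{H}_{\mathrm{SCI}}(0)\mathbf{x}$. (2) $\mathbf{x}^\intercal\mathbf{H}_{\mathrm{SCI}}'(1)\mathbf{x}>0$; in this case $g(\mathbf{x})=\mathbf{x}^\intercal\mathbf{H}_{\mathrm{SCI}}(1)\mathbf{x}$. (3) There exists a unique $\omega_0\in[0,1]$ such that $\mathbf{x}^\intercal\mathbf{H}_{\mathrm{SCI}}'(\omega_0)\mathbf{x}=0$; in this case $g(\mathbf{x})=\mathbf{x}^\intercal\mathbf{H}_{\mathrm{SCI}}(\omega_0)\mathbf{x}$.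
   Context: $\mathbf{C}_A=\mathbf{P}_A+\mathbf{Q}_A$, $\mathbf{C}_B=\mathbf{P}_B+\mathbf{Q}_B$. For $\omega\in[0,1]$, $\bar\omega=1-\omega$, let $\mathbf{H}_{\mathrm{SCI}}(\omega)=\omega(\mathbf{P}_A+\omega\mathbf{Q}_A)^{-1}+\bar\omega(\mathbf{P}_B+\bar\omega\mathbf{Q}_B)^{-1}$ and $\mathbf{H}_{\mathrm{SCI}}'$ its derivative with respect to $\omega$. $\mathcal{A}_{\mathrm{Split}}=\{\mathbf{M}\in\mathbb{R}^{n\times n} : \begin{bmatrix}\mathbf{P}_A & \mathbf{M}\\ \mathbf{M}^\intercal & \mathbf{P}_B\end{bmatrix}\succeq 0\}$. For $\mathbf{K}=(\mathbf{K}_A,\mathbf{K}_B)$, $\mathbf{C}_F(\mathbf{K},\mathbf{P}_{AB})=\mathbf{K}_A\mathbf{C}_A\mathbf{K}_A^\intercal+\mathbf{K}_A\mathbf{P}_{AB}\mathbf{K}_B^\intercal+\mathbf{K}_B\mathbf{P}_{AB}^\intercal\mathbf{K}_A^\intercal+\mathbf{K}_B\mathbf{C}_B\mathbf{K}_B^\intercal$. For $\mathbf{P}_{AB}\in\mathcal{A}_{\mathrm{Split}}$ let $\mathbf{R}=\mathbf{C}_A+\mathbf{C}_B-\mathbf{P}_{AB}-\mathbf{P}_{AB}^\intercal$, $\mathbf{K}_A^*=(\mathbf{C}_B-\mathbf{P}_{AB}^\intercal)\mathbf{R}^{-1}$, $\mathbf{C}_F^*(\mathbf{P}_{AB})=\mathbf{C}_F((\mathbf{K}_A^*,\mathbf{I}-\mathbf{K}_A^*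 ),\mathbf{P}_{AB})$ and $\mathbf{M}_F^*(\mathbf{P}_{AB})=\mathbf{C}_F^*(\mathbf{P}_{AB})^{-1}$. Define $g(\mathbf{x})=\min_{\mathbf{P}_{AB}\in\mathcal{A}_{\mathrm{Split}}}\mathbf{x}^\intercal\mathbf{M}_F^*(\mathbf{P}_{AB})\mathbf{x}$. *)

theory Defs
  imports "HOL-Analysis.Analysis"
begin

type_synonym 'n mat = "real ^ 'n ^ 'n"

definition sym_pos_def :: "'n::finite mat \<Rightarrow> bool" where
  "sym_pos_def P \<longleftrightarrow> transpose P = P \<and> (\<forall>x. x \<noteq> 0 \<longrightarrow> x \<bullet> (P *v x) > 0)"

definition psd :: "'m::finite mat \<Rightarrow> bool" where
  "psd M \<longleftrightarrow> transpose M = M \<and> (\<forall>z. z \<bullet> (M *v z) \<ge> 0)"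

definition block :: "'n::finite mat \<Rightarrow> 'n mat \<Rightarrow> 'n mat \<Rightarrow> 'n mat \<Rightarrow> real ^ ('n + 'n) ^ ('n + 'n)" where
  "block A B C D = (\<chi> i j. case i of
      Inl i' \<Rightarrow> (case j of Inl j' \<Rightarrow> A $ i' $ j' | Inr j' \<Rightarrow> B $ i' $ j')
    | Inr i' \<Rightarrow> (case j of Inl j' \<Rightarrow> C $ i' $ j' | Inr j' \<Rightarrow> D $ i' $ j'))"

definition H_SCI :: "'n::finite mat \<Rightarrow> 'n mat \<Rightarrow> 'n mat \<Rightarrow> 'n mat \<Rightarrow> real \<Rightarrow> 'n mat" where
  "H_SCI PA QA PB QB w =
     w *\<^sub>R matrix_inv (PA + w *\<^sub>R QA) + (1 - w) *\<^sub>R matrix_inv (PB + (1 - w) *\<^sub>R QB)"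

definition H_SCI' :: "'n::finite mat \<Rightarrow> 'n mat \<Rightarrow> 'n mat \<Rightarrow> 'n mat \<Rightarrow> real \<Rightarrow> 'n mat" where
  "H_SCI' PA QA PB QB w = vector_derivative (H_SCI PA QA PB QB) (at w)"

definition A_Split :: "'n::finite mat \<Rightarrow> 'n mat \<Rightarrow> 'n mat set" where
  "A_Split PA PB = {M. psd (block PA M (transpose M) PB)}"

definition C_F :: "'n::finite mat \<Rightarrow> 'n mat \<Rightarrow> 'n mat \<Rightarrow> 'n mat \<Rightarrow> 'n mat \<Rightarrow> 'n mat" where
  "C_F CA CB KA KB PAB =
     KA ** CA ** transpose KA + KA ** PAB ** transpose KB
     + KB ** transpose PAB ** transpose KA + KB ** CB ** transpose KB"

definition C_F_opt :: "'n::finite mat \<Rightarrow> 'n mat \<Rightarrow> 'n mat \<Rightarrow> 'n mat" where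
  "C_F_opt CA CB PAB =
    (let R = CA + CB - PAB - transpose PAB;
         KA = (CB - transpose PAB) ** matrix_inv R
     in C_F CA CB KA (mat 1 - KA) PAB)"

definition M_F_opt :: "'n::finite mat \<Rightarrow> 'n mat \<Rightarrow> 'n mat \<Rightarrow> 'n mat" where
  "M_F_opt CA CB PAB = matrix_inv (C_F_opt CA CB PAB)"

text \<open>g(x) = min over P_AB in A_Split of x^T M_F^*(P_AB) x (rendered as the infimum).\<close>
definition g_fun :: "'n::finite mat \<Rightarrow> 'n mat \<Rightarrow> 'n mat \<Rightarrow> 'n mat \<Rightarrow> real ^ 'n \<Rightarrow> real" where
  "g_fun PA QA PB QB x =
     Inf ((\<lambda>PAB. x \<bullet> (M_F_opt (PA + QA) (PB + QB) PAB *v x)) ` A_Split PA PB)"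

end

theory Submission
  imports Defs
begin

(* Fix M in A_Split and let J_M(t, s) = t'C_A t + 2 t'M s + s'C_B s be the quadratic form of the
   joint covariance of the two estimates.  The optimal fused covariance C_F^*(M) has the quadratic
   form v |-> min_t J_M(t, v - t), hence x'M_F^*(M)x = max_{t,s} (2 x'(t + s) - J_M(t, s)).
   Evaluating at t = w y_A, s = (1 - w) y_B, where y_A = (P_A + w Q_A)^-1 x and
   y_B = (P_B + (1 - w) Q_B)^-1 x, and using only that [P_A, M; M', P_B] is positive semidefinite in
   the direction (y_A, -y_B), gives x'H_SCI(w)x <= x'M_F^*(M)x for every w in [0, 1].
   Moreover x'H_SCI'(w)x = a(w) - b(w), where a(w) = y_A'P_A y_A is strictly decreasing and
   b(w) = y_B'P_B y_B strictly increasing, so w |-> x'H_SCI(w)x is strictly concave.  At its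
   maximiser the rank-one correlation M = P_A y_A (P_B y_B)' / max(a, b) lies in A_Split by
   Cauchy-Schwarz and makes (w y_A, (1 - w) y_B) a critical point, so the bound is attained.
   Thus g(x) is the maximum of x'H_SCI(w)x over [0, 1], and the three cases locate the maximiser. *)

declare transpose_matrix_vector [simp del] vector_transpose_matrix [simp del]
  \<comment> \<open>keep \<open>transpose A *v x\<close> instead of rewriting it to \<open>x v* A\<close>\<close>

lemma
  fixes A :: "'a::semiring_1^'n::finite^'m::finite"
  assumes "invertible A"
  shows matrix_inv_right: "A ** matrix_inv A = mat 1"
    and matrix_inv_left: "matrix_inv A ** A = mat 1"
proof -
  have "A ** matrix_inv A = mat 1 \<and> matrix_inv A ** A = mat 1"
    unfolding matrix_inv_def by (rule someI_ex) (use assms in \<open>simp add: invertible_def\<close>)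
  then show "A ** matrix_inv A = mat 1" "matrix_inv A ** A = mat 1" by auto
qed

lemma
  fixes A :: "'a::comm_semiring_1^'n::finite^'m::finite"
  assumes "invertible A"
  shows matrix_vector_inv_right: "A *v (matrix_inv A *v x) = x"
    and matrix_vector_inv_left: "matrix_inv A *v (A *v y) = y"
  by (simp_all add: matrix_vector_mul_assoc matrix_inv_right[OF assms] matrix_inv_left[OF assms])

lemma invertible_if_kernel_zero:
  fixes A :: "real^'n::finite^'n"
  assumes "\<And>x. A *v x = 0 \<Longrightarrow> x = 0"
  shows "invertible A"
  using assms invertible_left_inverse matrix_left_invertible_ker by blast

lemma transpose_add: "transpose (A + B) = transpose A + transpose (B::'a::ring_1^'n^'m)"
  by (simp add: transpose_def vec_eq_iff)

lemma transpose_diff: "transpose (A - B) = transpose A - transpose (B::'a::ring_1^'n^'m)"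
  by (simp add: transpose_def vec_eq_iff)

lemma matrix_vector_mult_uminus_right: "A *v (- x) = - (A *v x)"
  for A :: "'a::ring_1^'n::finite^'m"
  by (simp add: vec_eq_iff matrix_vector_mult_def sum_negf)

lemma matrix_vector_mult_scaleR_left: "(k *\<^sub>R A) *v x = k *\<^sub>R (A *v x)"
  for A :: "real^'n::finite^'m"
  by (simp add: scaleR_matrix_vector_assoc)

lemma matrix_add_rdistrib: "(A + B) ** C = A ** C + B ** C"
  for A B :: "'a::semiring_1^'n::finite^'m"
  by (simp add: matrix_matrix_mult_def vec_eq_iff sum.distrib distrib_right)

lemma matrix_diff_ldistrib: "A ** (B - C) = A ** B - A ** C"
  for A :: "'a::ring_1^'n::finite^'m"
  by (simp add: matrix_matrix_mult_def vec_eq_iff sum_subtractf right_diff_distrib)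

lemma matrix_mult_uminus_right: "A ** (- B) = - (A ** B)"
  for A :: "'a::ring_1^'n::finite^'m"
  by (simp add: matrix_matrix_mult_def vec_eq_iff sum_negf)

lemma matrix_mult_uminus_left: "(- A) ** B = - (A ** B)"
  for A :: "'a::ring_1^'n::finite^'m"
  by (simp add: matrix_matrix_mult_def vec_eq_iff sum_negf)

lemma inner_matrix_vector_transpose: "u \<bullet> (A *v w) = (transpose A *v u) \<bullet> w"
  for A :: "real^'n::finite^'m::finite"
  by (simp add: dot_lmul_matrix[symmetric] transpose_matrix_vector)

lemma inner_transpose_matrix_vector: "w \<bullet> (transpose A *v v) = v \<bullet> (A *v w)"
  for A :: "real^'n::finite^'m::finite"
  by (metis inner_matrix_vector_transpose inner_commute transpose_transpose)

lemma inner_symmetric_matrix_commute: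
  "transpose A = A \<Longrightarrow> u \<bullet> (A *v w) = w \<bullet> (A *v u)"
  for A :: "real^'n::finite^'n"
  by (metis inner_transpose_matrix_vector)

lemma matrix_inv_symmetric:
  fixes A :: "real^'n::finite^'n"
  assumes "invertible A" "transpose A = A"
  shows "transpose (matrix_inv A) = matrix_inv A"
proof -
  have "transpose (matrix_inv A) = transpose (matrix_inv A) ** (A ** matrix_inv A)"
    by (simp add: matrix_inv_right[OF assms(1)])
  also have "\<dots> = transpose (A ** matrix_inv A) ** matrix_inv A"
    by (simp add: matrix_transpose_mul matrix_mul_assoc assms(2))
  also have "\<dots> = matrix_inv A"
    by (simp add: matrix_inv_right[OF assms(1)])
  finally show ?thesis .
qed

lemma sym_pos_def_symmetric: "sym_pos_def P \<Longrightarrow> transpose P = P"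
  unfolding sym_pos_def_def by auto

lemma sym_pos_def_pos: "sym_pos_def P \<Longrightarrow> z \<noteq> 0 \<Longrightarrow> 0 < z \<bullet> (P *v z)"
  unfolding sym_pos_def_def by auto

lemma sym_pos_def_nonneg: "sym_pos_def P \<Longrightarrow> 0 \<le> z \<bullet> (P *v z)"
  by (cases "z = 0") (auto dest: sym_pos_def_pos[of P z])

lemma sym_pos_def_invertible:
  assumes "sym_pos_def P"
  shows "invertible P"
proof (rule invertible_if_kernel_zero)
  fix x
  assume "P *v x = 0"
  then show "x = 0" using sym_pos_def_pos[OF assms, of x] by auto
qed

lemma sym_pos_def_add_scaleR:
  assumes "sym_pos_def P" "sym_pos_def Q" "0 \<le> w"
  shows "sym_pos_def (P + w *\<^sub>R Q)"
  unfolding sym_pos_def_def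
proof (intro conjI allI impI)
  show "transpose (P + w *\<^sub>R Q) = P + w *\<^sub>R Q"
    using assms by (simp add: transpose_add transpose_scalar sym_pos_def_symmetric)
  fix x :: "real^'a"
  assume "x \<noteq> 0"
  then have "0 < x \<bullet> (P *v x) + w * (x \<bullet> (Q *v x))"
    using assms sym_pos_def_pos[of P x] sym_pos_def_nonneg[of Q x] by (simp add: add_pos_nonneg)
  then show "0 < x \<bullet> ((P + w *\<^sub>R Q) *v x)"
    by (simp add: matrix_vector_mult_add_rdistrib matrix_vector_mult_scaleR_left inner_add_right)
qed

lemma sym_pos_def_solve:
  "sym_pos_def P \<Longrightarrow> P *v (matrix_inv P *v x) = x"
  by (rule matrix_vector_inv_right[OF sym_pos_def_invertible])

lemma sym_pos_def_Cauchy_Schwarz: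
  assumes "sym_pos_def P"
  shows "(u \<bullet> (P *v v))\<^sup>2 \<le> (u \<bullet> (P *v u)) * (v \<bullet> (P *v v))"
proof (cases "v = 0")
  case False
  define c where "c = v \<bullet> (P *v v)"
  define m where "m = u \<bullet> (P *v v)"
  have c: "0 < c" unfolding c_def by (rule sym_pos_def_pos[OF assms False])
  have "0 \<le> (c *\<^sub>R u - m *\<^sub>R v) \<bullet> (P *v (c *\<^sub>R u - m *\<^sub>R v))"
    by (rule sym_pos_def_nonneg[OF assms])
  also have "\<dots> = c * (c * (u \<bullet> (P *v u)) - m\<^sup>2)"
    using inner_symmetric_matrix_commute[OF sym_pos_def_symmetric[OF assms], of v u]
    by (simp add: power2_eq_square algebra_simps flip: c_def m_def)
  finally show ?thesis
    using c by (simp add: zero_le_mult_iff c_def m_def mult.commute)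
qed simp

lemma sym_pos_def_inverse_form_ge:
  assumes "sym_pos_def C"
  shows "2 * (x \<bullet> v) - v \<bullet> (C *v v) \<le> x \<bullet> (matrix_inv C *v x)"
proof -
  define w where "w = matrix_inv C *v x"
  have Cw: "C *v w = x" unfolding w_def by (rule sym_pos_def_solve[OF assms])
  have sym: "v \<bullet> (C *v w) = w \<bullet> (C *v v)"
    by (rule inner_symmetric_matrix_commute[OF sym_pos_def_symmetric[OF assms]])
  have "0 \<le> (w - v) \<bullet> (C *v (w - v))" by (rule sym_pos_def_nonneg[OF assms])
  also have "\<dots> = x \<bullet> w - 2 * (x \<bullet> v) + v \<bullet> (C *v v)"
    using sym by (simp add: inner_diff_left inner_diff_right matrix_vector_mult_diff_distrib Cw inner_commute)
  finally show ?thesis unfolding w_def by simp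
qed

section \<open>Block matrices and the joint quadratic form\<close>

definition join_vec :: "real^'n::finite \<Rightarrow> real^'n \<Rightarrow> real^('n + 'n)" where
  "join_vec v w = (\<chi> i. case i of Inl a \<Rightarrow> v $ a | Inr b \<Rightarrow> w $ b)"

lemma sum_UNIV_Plus:
  "sum f (UNIV :: ('a::finite + 'b::finite) set) = (\<Sum>a\<in>UNIV. f (Inl a)) + (\<Sum>b\<in>UNIV. f (Inr b))"
  by (subst UNIV_Plus_UNIV[symmetric], subst sum.Plus) (auto simp: o_def)

lemma inner_join_vec: "join_vec a b \<bullet> join_vec c d = a \<bullet> c + b \<bullet> d"
  unfolding inner_vec_def join_vec_def by (simp add: sum_UNIV_Plus)

lemma join_vec_cases: obtains v w where "z = join_vec v w"
proof
  show "z = join_vec (\<chi> a. z $ Inl a) (\<chi> b. z $ Inr b)"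
    by (simp add: join_vec_def vec_eq_iff split: sum.split)
qed

lemma block_mult_join_vec:
  fixes A B C D :: "real^'n::finite^'n"
  shows "block A B C D *v join_vec v w = join_vec (A *v v + B *v w) (C *v v + D *v w)"
  by (simp add: vec_eq_iff matrix_vector_mult_def block_def join_vec_def sum_UNIV_Plus
      split: sum.split)

lemma transpose_block:
  fixes A B C D :: "real^'n::finite^'n"
  shows "transpose (block A B C D) = block (transpose A) (transpose C) (transpose B) (transpose D)"
  by (simp add: vec_eq_iff transpose_def block_def split: sum.split)

definition joint_form :: "'n::finite mat \<Rightarrow> 'n mat \<Rightarrow> 'n mat \<Rightarrow> real^'n \<Rightarrow> real^'n \<Rightarrow> real" where
  "joint_form CA CB M t s = t \<bullet> (CA *v t) + 2 * (t \<bullet> (M *v s)) + s \<bullet> (CB *v s)"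

lemma block_quadratic_form:
  "join_vec t s \<bullet> (block CA M (transpose M) CB *v join_vec t s) = joint_form CA CB M t s"
  by (simp add: block_mult_join_vec inner_join_vec inner_add_right joint_form_def
      inner_transpose_matrix_vector)

lemma A_Split_iff:
  assumes "transpose PA = PA" "transpose PB = PB"
  shows "M \<in> A_Split PA PB \<longleftrightarrow> (\<forall>t s. 0 \<le> joint_form PA PB M t s)"
proof -
  have "(\<forall>z. 0 \<le> z \<bullet> (block PA M (transpose M) PB *v z)) \<longleftrightarrow> (\<forall>t s. 0 \<le> joint_form PA PB M t s)"
    by (metis block_quadratic_form join_vec_cases)
  moreover have "transpose (block PA M (transpose M) PB) = block PA M (transpose M) PB"
    using assms by (simp add: transpose_block)
  ultimately show ?thesis
    unfolding A_Split_def psd_def by simp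
qed

lemma joint_form_add:
  "joint_form (PA + QA) (PB + QB) M t s = joint_form PA PB M t s + t \<bullet> (QA *v t) + s \<bullet> (QB *v s)"
  by (simp add: joint_form_def matrix_vector_mult_add_rdistrib inner_add_right)

section \<open>The optimal fused information as a conjugate quadratic form\<close>

lemma C_F_mult_vector:
  "C_F CA CB KA KB M *v v =
     KA *v (CA *v (transpose KA *v v) + M *v (transpose KB *v v)) +
     KB *v (transpose M *v (transpose KA *v v) + CB *v (transpose KB *v v))"
  unfolding C_F_def
  by (simp add: matrix_vector_mult_add_rdistrib matrix_vector_right_distrib matrix_vector_mul_assoc
      matrix_mul_assoc add_ac)

lemma C_F_quadratic_form:
  "v \<bullet> (C_F CA CB KA KB M *v v) = joint_form CA CB M (transpose KA *v v) (transpose KB *v v)"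
  by (simp add: C_F_mult_vector inner_add_right inner_matrix_vector_transpose[of v]
      inner_transpose_matrix_vector joint_form_def)

lemma transpose_C_F:
  assumes "transpose CA = CA" "transpose CB = CB"
  shows "transpose (C_F CA CB KA KB M) = C_F CA CB KA KB M"
  unfolding C_F_def
  by (simp add: transpose_add matrix_transpose_mul matrix_mul_assoc assms add_ac)

definition K_A_opt :: "'n::finite mat \<Rightarrow> 'n mat \<Rightarrow> 'n mat \<Rightarrow> 'n mat" where
  "K_A_opt CA CB M = (CB - transpose M) ** matrix_inv (CA + CB - M - transpose M)"

lemma C_F_opt_eq_C_F: "C_F_opt CA CB M = C_F CA CB (K_A_opt CA CB M) (mat 1 - K_A_opt CA CB M) M"
  by (simp add: C_F_opt_def K_A_opt_def Let_def)

lemma joint_form_complement: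
  assumes "transpose CB = CB"
  shows "joint_form CA CB M t (v - t) =
    t \<bullet> ((CA + CB - M - transpose M) *v t) - 2 * (t \<bullet> ((CB - M) *v v)) + v \<bullet> (CB *v v)"
  using inner_symmetric_matrix_commute[OF assms, of v t]
  by (simp add: joint_form_def algebra_simps inner_transpose_matrix_vector)

locale pos_def_joint_cov =
  fixes CA CB M :: "real^'n::finite^'n"
  assumes sym_CA: "transpose CA = CA" and sym_CB: "transpose CB = CB"
    and joint_form_pos: "\<And>t s. t \<noteq> 0 \<or> s \<noteq> 0 \<Longrightarrow> 0 < joint_form CA CB M t s"
begin

lemma sym_pos_def_difference_cov: "sym_pos_def (CA + CB - M - transpose M)"
  unfolding sym_pos_def_def
proof (intro conjI allI impI)
  show "transpose (CA + CB - M - transpose M) = CA + CB - M - transpose M"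
    by (simp add: transpose_add transpose_diff sym_CA sym_CB)
  fix z :: "real^'n"
  assume "z \<noteq> 0"
  then have "0 < joint_form CA CB M z (- z)" by (intro joint_form_pos) simp
  then show "0 < z \<bullet> ((CA + CB - M - transpose M) *v z)"
    by (simp add: joint_form_def matrix_vector_mult_uminus_right algebra_simps
        inner_transpose_matrix_vector)
qed

lemma transpose_K_A_opt_mult_eq_iff:
  "transpose (K_A_opt CA CB M) *v v = t \<longleftrightarrow> (CA + CB - M - transpose M) *v t = (CB - M) *v v"
proof -
  let ?R = "CA + CB - M - transpose M"
  have inv: "invertible ?R" and sym: "transpose (matrix_inv ?R) = matrix_inv ?R"
    using sym_pos_def_difference_cov
    by (auto intro: matrix_inv_symmetric sym_pos_def_invertible sym_pos_def_symmetric)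
  have "transpose (K_A_opt CA CB M) *v v = matrix_inv ?R *v ((CB - M) *v v)"
    by (simp add: K_A_opt_def matrix_transpose_mul sym transpose_diff sym_CB matrix_vector_mul_assoc)
  then show ?thesis
    by (metis inv matrix_vector_inv_left matrix_vector_inv_right)
qed

lemma joint_form_K_A_opt_le:
  fixes v t :: "real^'n"
  defines "t\<^sub>0 \<equiv> transpose (K_A_opt CA CB M) *v v"
  shows "joint_form CA CB M t\<^sub>0 (v - t\<^sub>0) \<le> joint_form CA CB M t (v - t)"
proof -
  let ?R = "CA + CB - M - transpose M"
  have R_pd: "sym_pos_def ?R" by (rule sym_pos_def_difference_cov)
  have Rt0: "?R *v t\<^sub>0 = (CB - M) *v v"
    using transpose_K_A_opt_mult_eq_iff t\<^sub>0_def by blast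
  have sym: "t\<^sub>0 \<bullet> (?R *v t) = t \<bullet> (?R *v t\<^sub>0)"
    by (rule inner_symmetric_matrix_commute[OF sym_pos_def_symmetric[OF R_pd]])
  have "joint_form CA CB M t (v - t) - joint_form CA CB M t\<^sub>0 (v - t\<^sub>0) =
      t \<bullet> (?R *v t) - 2 * (t \<bullet> (?R *v t\<^sub>0)) + t\<^sub>0 \<bullet> (?R *v t\<^sub>0)"
    unfolding joint_form_complement[OF sym_CB] Rt0[symmetric] by simp
  also have "\<dots> = (t - t\<^sub>0) \<bullet> (?R *v (t - t\<^sub>0))"
    by (simp add: inner_diff_left inner_diff_right matrix_vector_mult_diff_distrib sym)
  finally show ?thesis
    using sym_pos_def_nonneg[OF R_pd, of "t - t\<^sub>0"] by linarith
qed

lemma C_F_opt_quadratic_form: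
  "v \<bullet> (C_F_opt CA CB M *v v) =
     joint_form CA CB M (transpose (K_A_opt CA CB M) *v v) (v - transpose (K_A_opt CA CB M) *v v)"
  by (simp add: C_F_opt_eq_C_F C_F_quadratic_form transpose_diff matrix_vector_mult_diff_rdistrib)

lemma C_F_opt_sym_pos_def: "sym_pos_def (C_F_opt CA CB M)"
  unfolding sym_pos_def_def
proof (intro conjI allI impI)
  show "transpose (C_F_opt CA CB M) = C_F_opt CA CB M"
    by (simp add: C_F_opt_eq_C_F transpose_C_F sym_CA sym_CB)
  fix v :: "real^'n"
  assume "v \<noteq> 0"
  then show "0 < v \<bullet> (C_F_opt CA CB M *v v)"
    by (auto simp: C_F_opt_quadratic_form intro!: joint_form_pos)
qed

lemma M_F_opt_lower_bound:
  "2 * (x \<bullet> (t + s)) - joint_form CA CB M t s \<le> x \<bullet> (M_F_opt CA CB M *v x)"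
proof -
  have "(t + s) \<bullet> (C_F_opt CA CB M *v (t + s)) \<le> joint_form CA CB M t s"
    using joint_form_K_A_opt_le[of "t + s" t] by (simp add: C_F_opt_quadratic_form)
  then show ?thesis
    using sym_pos_def_inverse_form_ge[OF C_F_opt_sym_pos_def, of x "t + s"]
    unfolding M_F_opt_def by linarith
qed

lemma M_F_opt_stationary:
  assumes "CA *v t + M *v s = x" "transpose M *v t + CB *v s = x"
  shows "x \<bullet> (M_F_opt CA CB M *v x) = x \<bullet> (t + s)"
proof -
  let ?K = "K_A_opt CA CB M"
  have "(CA + CB - M - transpose M) *v t = (CB - M) *v (t + s)"
    using assms by (simp add: algebra_simps)
  then have Kt: "transpose ?K *v (t + s) = t"
    using transpose_K_A_opt_mult_eq_iff by blast
  have "C_F_opt CA CB M *v (t + s) = ?K *v x + (mat 1 - ?K) *v x"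
    using assms by (simp add: C_F_opt_eq_C_F C_F_mult_vector transpose_diff
        matrix_vector_mult_diff_rdistrib Kt)
  also have "\<dots> = x" by (simp add: matrix_vector_mult_diff_rdistrib)
  finally show ?thesis
    unfolding M_F_opt_def
    by (metis C_F_opt_sym_pos_def sym_pos_def_invertible matrix_vector_inv_left)
qed

end

lemma pos_def_joint_cov_A_Split:
  assumes "sym_pos_def PA" "sym_pos_def PB" "sym_pos_def QA" "sym_pos_def QB" "M \<in> A_Split PA PB"
  shows "pos_def_joint_cov (PA + QA) (PB + QB) M"
proof
  show "transpose (PA + QA) = PA + QA" "transpose (PB + QB) = PB + QB"
    using assms by (simp_all add: transpose_add sym_pos_def_symmetric)
  fix t s :: "real^'a"
  assume "t \<noteq> 0 \<or> s \<noteq> 0"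
  moreover have "0 \<le> joint_form PA PB M t s"
    using assms(1,2,5) A_Split_iff sym_pos_def_symmetric by blast
  ultimately show "0 < joint_form (PA + QA) (PB + QB) M t s"
    using assms(3,4) sym_pos_def_pos[of QA t] sym_pos_def_nonneg[of QA t]
      sym_pos_def_pos[of QB s] sym_pos_def_nonneg[of QB s]
    by (auto simp: joint_form_add)
qed

section \<open>The SCI information as the optimal bound\<close>

definition resolvent_energy :: "'n::finite mat \<Rightarrow> 'n mat \<Rightarrow> real^'n \<Rightarrow> real \<Rightarrow> real" where
  "resolvent_energy P Q x w =
     (matrix_inv (P + w *\<^sub>R Q) *v x) \<bullet> (P *v (matrix_inv (P + w *\<^sub>R Q) *v x))"

lemma inner_eq_if_solves:
  fixes P Q :: "real^'n::finite^'n"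
  assumes "(P + w *\<^sub>R Q) *v y = x"
  shows "x \<bullet> y = y \<bullet> (P *v y) + w * (y \<bullet> (Q *v y))"
  by (simp add: assms[symmetric] inner_commute matrix_vector_mult_add_rdistrib
      matrix_vector_mult_scaleR_left inner_add_right)

lemma H_SCI_quadratic_form:
  "x \<bullet> (H_SCI PA QA PB QB w *v x) =
     w * (x \<bullet> (matrix_inv (PA + w *\<^sub>R QA) *v x)) +
     (1 - w) * (x \<bullet> (matrix_inv (PB + (1 - w) *\<^sub>R QB) *v x))"
  by (simp add: H_SCI_def matrix_vector_mult_add_rdistrib matrix_vector_mult_scaleR_left inner_add_right)

lemma H_SCI_le_M_F_opt:
  assumes pd: "sym_pos_def PA" "sym_pos_def PB" "sym_pos_def QA" "sym_pos_def QB"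
    and M: "M \<in> A_Split PA PB" and w: "0 \<le> w" "w \<le> 1"
  shows "x \<bullet> (H_SCI PA QA PB QB w *v x) \<le> x \<bullet> (M_F_opt (PA + QA) (PB + QB) M *v x)"
proof -
  define yA where "yA = matrix_inv (PA + w *\<^sub>R QA) *v x"
  define yB where "yB = matrix_inv (PB + (1 - w) *\<^sub>R QB) *v x"
  have xyA: "x \<bullet> yA = yA \<bullet> (PA *v yA) + w * (yA \<bullet> (QA *v yA))"
    unfolding yA_def using pd w
    by (intro inner_eq_if_solves sym_pos_def_solve sym_pos_def_add_scaleR) auto
  have xyB: "x \<bullet> yB = yB \<bullet> (PB *v yB) + (1 - w) * (yB \<bullet> (QB *v yB))"
    unfolding yB_def using pd w
    by (intro inner_eq_if_solves sym_pos_def_solve sym_pos_def_add_scaleR) auto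
  have "0 \<le> joint_form PA PB M yA (- yB)"
    using M pd A_Split_iff sym_pos_def_symmetric by blast
  then have "0 \<le> w * (1 - w) * joint_form PA PB M yA (- yB)"
    using w by simp
  also have "\<dots> = 2 * (x \<bullet> (w *\<^sub>R yA + (1 - w) *\<^sub>R yB))
      - joint_form (PA + QA) (PB + QB) M (w *\<^sub>R yA) ((1 - w) *\<^sub>R yB)
      - x \<bullet> (H_SCI PA QA PB QB w *v x)"
    unfolding H_SCI_quadratic_form yA_def[symmetric] yB_def[symmetric]
    by (simp add: joint_form_def xyA xyB matrix_vector_mult_uminus_right algebra_simps)
  also have "\<dots> \<le> x \<bullet> (M_F_opt (PA + QA) (PB + QB) M *v x) - x \<bullet> (H_SCI PA QA PB QB w *v x)"
    using pos_def_joint_cov.M_F_opt_lower_bound[OF pos_def_joint_cov_A_Split[OF pd M]] by simp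
  finally show ?thesis by simp
qed

definition outer_prod :: "real^'n::finite \<Rightarrow> real^'n \<Rightarrow> real^'n^'n" where
  "outer_prod p q = (\<chi> i j. p $ i * q $ j)"

lemma outer_prod_mult_vector: "outer_prod p q *v s = (q \<bullet> s) *\<^sub>R p"
  by (simp add: outer_prod_def vec_eq_iff matrix_vector_mult_def inner_vec_def sum_distrib_left mult_ac)

lemma transpose_outer_prod: "transpose (outer_prod p q) = outer_prod q p"
  by (simp add: outer_prod_def transpose_def vec_eq_iff)

lemma cross_term_bound:
  fixes X Y s r g :: real
  assumes "s\<^sup>2 \<le> X * g" "r\<^sup>2 \<le> Y * g" "0 < g"
  shows "0 \<le> X + 2 * (s * r) / g + Y"
proof -
  have "0 \<le> X * g" "0 \<le> Y * g"
    using assms(1,2) zero_le_power2[of s] zero_le_power2[of r] by linarith+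
  then have XY: "0 \<le> X" "0 \<le> Y"
    using assms(3) by (simp_all add: zero_le_mult_iff)
  have "(2 * s * r)\<^sup>2 = 4 * (s\<^sup>2 * r\<^sup>2)" by algebra
  also have "\<dots> \<le> 4 * ((X * g) * (Y * g))"
    using mult_mono[OF assms(1,2)] XY assms(3) by simp
  also have "\<dots> \<le> (g * (X + Y))\<^sup>2"
    using sum_squares_ge_zero[of "g * (X - Y)" 0] by (simp add: power2_eq_square algebra_simps)
  finally have "\<bar>2 * s * r\<bar> \<le> g * (X + Y)"
    using XY assms(3) abs_le_square_iff[of "2 * s * r" "g * (X + Y)"] by simp
  then have "- (X + Y) \<le> 2 * (s * r) / g"
    using assms(3) by (simp add: le_divide_eq algebra_simps)
  then show ?thesis by simp
qed

lemma rank_one_A_Split: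
  assumes "sym_pos_def PA" "sym_pos_def PB" "0 < g"
    and "yA \<bullet> (PA *v yA) \<le> g" "yB \<bullet> (PB *v yB) \<le> g"
  shows "(1 / g) *\<^sub>R outer_prod (PA *v yA) (PB *v yB) \<in> A_Split PA PB"
proof -
  have "0 \<le> joint_form PA PB ((1 / g) *\<^sub>R outer_prod (PA *v yA) (PB *v yB)) t s" for t s
  proof -
    have A: "(t \<bullet> (PA *v yA))\<^sup>2 \<le> (t \<bullet> (PA *v t)) * g"
      using sym_pos_def_Cauchy_Schwarz[OF assms(1), of t yA] assms(4)
        sym_pos_def_nonneg[OF assms(1), of t] by (meson mult_left_mono order_trans)
    have B: "((PB *v yB) \<bullet> s)\<^sup>2 \<le> (s \<bullet> (PB *v s)) * g"
      using sym_pos_def_Cauchy_Schwarz[OF assms(2), of s yB] assms(5)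
        sym_pos_def_nonneg[OF assms(2), of s] by (metis inner_commute mult_left_mono order_trans)
    have "joint_form PA PB ((1 / g) *\<^sub>R outer_prod (PA *v yA) (PB *v yB)) t s =
        s \<bullet> (PB *v s) + 2 * (((PB *v yB) \<bullet> s) * (t \<bullet> (PA *v yA))) / g + t \<bullet> (PA *v t)"
      by (simp add: joint_form_def matrix_vector_mult_scaleR_left outer_prod_mult_vector)
    with cross_term_bound[OF B A assms(3)] show ?thesis by linarith
  qed
  then show ?thesis
    using assms A_Split_iff sym_pos_def_symmetric by blast
qed

lemma M_F_opt_eq_H_SCI_if_kkt:
  assumes pd: "sym_pos_def PA" "sym_pos_def PB" "sym_pos_def QA" "sym_pos_def QB"
    and x: "x \<noteq> 0" and w: "0 \<le> w" "w \<le> 1"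
    and kkt0: "0 < w \<Longrightarrow> resolvent_energy PB QB x (1 - w) \<le> resolvent_energy PA QA x w"
    and kkt1: "w < 1 \<Longrightarrow> resolvent_energy PA QA x w \<le> resolvent_energy PB QB x (1 - w)"
  shows "\<exists>M \<in> A_Split PA PB.
           x \<bullet> (M_F_opt (PA + QA) (PB + QB) M *v x) = x \<bullet> (H_SCI PA QA PB QB w *v x)"
proof -
  define yA where "yA = matrix_inv (PA + w *\<^sub>R QA) *v x"
  define yB where "yB = matrix_inv (PB + (1 - w) *\<^sub>R QB) *v x"
  have eA: "(PA + w *\<^sub>R QA) *v yA = x"
    unfolding yA_def using pd w by (intro sym_pos_def_solve sym_pos_def_add_scaleR) auto
  have eB: "(PB + (1 - w) *\<^sub>R QB) *v yB = x"
    unfolding yB_def using pd w by (intro sym_pos_def_solve sym_pos_def_add_scaleR) auto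
  define a where "a = yA \<bullet> (PA *v yA)"
  define b where "b = yB \<bullet> (PB *v yB)"
  define g where "g = max a b"
  have "a > 0" "b > 0"
    unfolding a_def b_def using eA eB x pd by (auto intro!: sym_pos_def_pos)
  then have g: "0 < g" unfolding g_def by simp
  have coefA: "w + (1 - w) * (b / g) = 1"
    using kkt1 w \<open>b > 0\<close> unfolding g_def a_def b_def resolvent_energy_def yA_def yB_def
    by (cases "w < 1") (auto simp: max_def)
  have coefB: "(1 - w) + w * (a / g) = 1"
    using kkt0 w \<open>a > 0\<close> unfolding g_def a_def b_def resolvent_energy_def yA_def yB_def
    by (cases "0 < w") (auto simp: max_def)
  \<comment> \<open>by the KKT conditions, this rank-one \<open>M\<close> makes \<open>(w y\<^sub>A, (1 - w) y\<^sub>B)\<close> a stationary point\<close>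
  define M where "M = (1 / g) *\<^sub>R outer_prod (PA *v yA) (PB *v yB)"
  have M: "M \<in> A_Split PA PB"
    unfolding M_def using pd g by (intro rank_one_A_Split) (auto simp: g_def a_def b_def)
  have "(PA + QA) *v (w *\<^sub>R yA) + M *v ((1 - w) *\<^sub>R yB) =
      (w + (1 - w) * (b / g)) *\<^sub>R (PA *v yA) + w *\<^sub>R (QA *v yA)"
    by (simp add: M_def b_def outer_prod_mult_vector matrix_vector_mult_scaleR_left
        matrix_vector_mult_add_rdistrib matrix_vector_mult_scaleR scaleR_add_left scaleR_add_right
        inner_commute)
  also have "\<dots> = x"
    using eA unfolding coefA by (simp add: matrix_vector_mult_add_rdistrib matrix_vector_mult_scaleR_left)
  finally have statA: "(PA + QA) *v (w *\<^sub>R yA) + M *v ((1 - w) *\<^sub>R yB) = x" .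
  have "transpose M *v (w *\<^sub>R yA) + (PB + QB) *v ((1 - w) *\<^sub>R yB) =
      ((1 - w) + w * (a / g)) *\<^sub>R (PB *v yB) + (1 - w) *\<^sub>R (QB *v yB)"
    by (simp add: M_def a_def transpose_scalar transpose_outer_prod outer_prod_mult_vector
        matrix_vector_mult_scaleR_left matrix_vector_mult_add_rdistrib matrix_vector_mult_scaleR
        scaleR_add_left scaleR_add_right inner_commute)
  also have "\<dots> = x"
    using eB unfolding coefB by (simp add: matrix_vector_mult_add_rdistrib matrix_vector_mult_scaleR_left)
  finally have statB: "transpose M *v (w *\<^sub>R yA) + (PB + QB) *v ((1 - w) *\<^sub>R yB) = x" .
  have "x \<bullet> (M_F_opt (PA + QA) (PB + QB) M *v x) = x \<bullet> (w *\<^sub>R yA + (1 - w) *\<^sub>R yB)"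
    by (rule pos_def_joint_cov.M_F_opt_stationary[OF pos_def_joint_cov_A_Split[OF pd M] statA statB])
  also have "\<dots> = x \<bullet> (H_SCI PA QA PB QB w *v x)"
    by (simp add: H_SCI_quadratic_form inner_add_right yA_def yB_def)
  finally show ?thesis using M by blast
qed

lemma g_fun_eq_H_SCI_if_kkt:
  assumes pd: "sym_pos_def PA" "sym_pos_def PB" "sym_pos_def QA" "sym_pos_def QB"
    and "x \<noteq> 0" and w: "0 \<le> w" "w \<le> 1"
    and "0 < w \<Longrightarrow> resolvent_energy PB QB x (1 - w) \<le> resolvent_energy PA QA x w"
    and "w < 1 \<Longrightarrow> resolvent_energy PA QA x w \<le> resolvent_energy PB QB x (1 - w)"
  shows "g_fun PA QA PB QB x = x \<bullet> (H_SCI PA QA PB QB w *v x)"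
  unfolding g_fun_def
proof (rule cInf_eq_minimum)
  show "x \<bullet> (H_SCI PA QA PB QB w *v x) \<in> (\<lambda>M. x \<bullet> (M_F_opt (PA + QA) (PB + QB) M *v x)) ` A_Split PA PB"
    using M_F_opt_eq_H_SCI_if_kkt[OF assms] by force
qed (use H_SCI_le_M_F_opt[OF pd _ w] in auto)

section \<open>Differentiating the SCI information\<close>

lemma invertible_bounded_below:
  fixes A :: "real^'n::finite^'n"
  assumes "invertible A"
  shows "\<exists>B>0. \<forall>v. B * norm v \<le> norm (A *v v)"
proof -
  have "(\<lambda>x. matrix_inv A *v x) \<circ> (\<lambda>x. A *v x) = id"
    by (simp add: fun_eq_iff matrix_vector_inv_left[OF assms])
  then show ?thesis
    using linear_invertible_bounded_below_pos[OF matrix_vector_mul_linear matrix_vector_mul_linear]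
    by blast
qed

lemma invertible_affine_perturbation:
  fixes A Q :: "real^'n::finite^'n"
  assumes "invertible A"
  obtains e B where "0 < e" "0 < B"
    "\<And>h. \<bar>h\<bar> < e \<Longrightarrow> invertible (A + h *\<^sub>R Q)"
    "\<And>h v. \<bar>h\<bar> < e \<Longrightarrow> B * norm v \<le> norm ((A + h *\<^sub>R Q) *v v)"
proof -
  obtain B where B: "0 < B" "\<And>v. B * norm v \<le> norm (A *v v)"
    using invertible_bounded_below[OF assms] by auto
  obtain K where K: "0 < K" "\<And>v. norm (Q *v v) \<le> K * norm v"
    using linear_bounded_pos[OF matrix_vector_mul_linear[of Q]] by metis
  define e where "e = B / (2 * K)"
  have bound: "(B / 2) * norm v \<le> norm ((A + h *\<^sub>R Q) *v v)" if h: "\<bar>h\<bar> < e" for h v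
  proof -
    have "B * norm v \<le> norm ((A + h *\<^sub>R Q) *v v - h *\<^sub>R (Q *v v))"
      using B(2)[of v] by (simp add: matrix_vector_mult_add_rdistrib matrix_vector_mult_scaleR_left)
    also have "\<dots> \<le> norm ((A + h *\<^sub>R Q) *v v) + \<bar>h\<bar> * norm (Q *v v)"
      using norm_triangle_ineq4[of "(A + h *\<^sub>R Q) *v v" "h *\<^sub>R (Q *v v)"] by simp
    also have "\<bar>h\<bar> * norm (Q *v v) \<le> e * (K * norm v)"
      using h K by (intro mult_mono) auto
    also have "e * (K * norm v) = (B / 2) * norm v"
      unfolding e_def using K by simp
    finally show ?thesis by simp
  qed
  show ?thesis
  proof (rule that[of e "B / 2"])
    show "0 < e" "0 < B / 2" unfolding e_def using B K by simp_all
    fix h :: real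
    assume h: "\<bar>h\<bar> < e"
    then show "\<And>v. B / 2 * norm v \<le> norm ((A + h *\<^sub>R Q) *v v)" by (rule bound)
    show "invertible (A + h *\<^sub>R Q)"
    proof (rule invertible_if_kernel_zero)
      fix v
      assume "(A + h *\<^sub>R Q) *v v = 0"
      then show "v = 0" using bound[OF h, of v] B(1) by (simp add: mult_le_0_iff)
    qed
  qed
qed

lemma matrix_inv_affine_perturbation:
  fixes A Q :: "real^'n::finite^'n"
  assumes "invertible A" "invertible (A + h *\<^sub>R Q)"
  shows "matrix_inv (A + h *\<^sub>R Q) = matrix_inv A - h *\<^sub>R (matrix_inv A ** Q ** matrix_inv (A + h *\<^sub>R Q))"
proof -
  let ?N = "matrix_inv (A + h *\<^sub>R Q)"
  have "matrix_inv A = matrix_inv A ** ((A + h *\<^sub>R Q) ** ?N)"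
    by (simp add: matrix_inv_right[OF assms(2)])
  also have "\<dots> = (matrix_inv A ** A) ** ?N + h *\<^sub>R (matrix_inv A ** Q ** ?N)"
    by (simp add: matrix_mul_assoc matrix_add_ldistrib matrix_add_rdistrib matrix_scalar_ac
        scalar_matrix_assoc)
  also have "\<dots> = ?N + h *\<^sub>R (matrix_inv A ** Q ** ?N)"
    by (simp add: matrix_inv_left[OF assms(1)])
  finally show ?thesis by (simp add: algebra_simps)
qed

lemma tendsto_matrix_inv_affine:
  fixes A Q :: "real^'n::finite^'n"
  assumes "invertible A"
  shows "((\<lambda>h. matrix_inv (A + h *\<^sub>R Q)) \<longlongrightarrow> matrix_inv A) (at 0)"
proof -
  obtain e B where e: "0 < e" "0 < B"
    "\<And>h. \<bar>h\<bar> < e \<Longrightarrow> invertible (A + h *\<^sub>R Q)"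
    "\<And>h v. \<bar>h\<bar> < e \<Longrightarrow> B * norm v \<le> norm ((A + h *\<^sub>R Q) *v v)"
    using invertible_affine_perturbation[OF assms] by metis
  obtain K where K: "0 < K" "\<And>v. norm ((matrix_inv A ** Q) *v v) \<le> K * norm v"
    using linear_bounded_pos[OF matrix_vector_mul_linear[of "matrix_inv A ** Q"]] by metis
  have columns: "((\<lambda>h. matrix_inv (A + h *\<^sub>R Q) *v x) \<longlongrightarrow> matrix_inv A *v x) (at 0)" for x
  proof -
    have "\<forall>\<^sub>F h in at 0. norm (matrix_inv (A + h *\<^sub>R Q) *v x - matrix_inv A *v x) \<le> \<bar>h\<bar> * (K * (norm x / B))"
      unfolding eventually_at
    proof (intro exI[of _ e] conjI ballI impI)
      fix h :: real
      assume "h \<noteq> 0 \<and> dist h 0 < e"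
      then have h: "\<bar>h\<bar> < e" by simp
      let ?y = "matrix_inv (A + h *\<^sub>R Q) *v x"
      have "B * norm ?y \<le> norm x"
        using e(4)[OF h, of ?y] by (simp add: matrix_vector_inv_right[OF e(3)[OF h]])
      then have y: "norm ?y \<le> norm x / B" using e(2) by (simp add: field_simps)
      have "?y - matrix_inv A *v x = - (h *\<^sub>R ((matrix_inv A ** Q) *v ?y))"
        by (subst matrix_inv_affine_perturbation[OF assms e(3)[OF h]])
          (simp add: matrix_vector_mult_diff_rdistrib matrix_vector_mult_scaleR_left matrix_vector_mul_assoc)
      then have "norm (?y - matrix_inv A *v x) = \<bar>h\<bar> * norm ((matrix_inv A ** Q) *v ?y)"
        by simp
      also have "\<dots> \<le> \<bar>h\<bar> * (K * (norm x / B))"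
        using K y by (intro mult_left_mono order_trans[OF K(2)]) simp_all
      finally show "norm (?y - matrix_inv A *v x) \<le> \<bar>h\<bar> * (K * (norm x / B))" .
    qed (rule e(1))
    moreover have "((\<lambda>h. \<bar>h\<bar> * (K * (norm x / B))) \<longlongrightarrow> \<bar>0\<bar> * (K * (norm x / B))) (at (0::real))"
      by (intro tendsto_intros)
    ultimately have "((\<lambda>h. matrix_inv (A + h *\<^sub>R Q) *v x - matrix_inv A *v x) \<longlongrightarrow> 0) (at 0)"
      by (auto intro: Lim_null_comparison)
    then show ?thesis by (simp add: LIM_zero_iff)
  qed
  show ?thesis
  proof (intro vec_tendstoI)
    fix i j
    show "((\<lambda>h. matrix_inv (A + h *\<^sub>R Q) $ i $ j) \<longlongrightarrow> matrix_inv A $ i $ j) (at 0)"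
      using tendsto_vec_nth[OF columns[of "axis j 1"], of i]
      by (simp add: matrix_vector_mult_basis column_def)
  qed
qed

lemma tendsto_matrix_mult_left:
  fixes X :: "real^'n::finite^'n"
  assumes "(G \<longlongrightarrow> G\<^sub>0) F"
  shows "((\<lambda>t. X ** G t) \<longlongrightarrow> X ** G\<^sub>0) F"
  unfolding matrix_matrix_mult_def by (auto intro!: vec_tendstoI tendsto_intros assms)

lemma has_vector_derivative_matrix_inv_affine:
  fixes P Q :: "real^'n::finite^'n"
  assumes "invertible (P + w *\<^sub>R Q)"
  shows "((\<lambda>w. matrix_inv (P + w *\<^sub>R Q)) has_vector_derivative
           - (matrix_inv (P + w *\<^sub>R Q) ** Q ** matrix_inv (P + w *\<^sub>R Q))) (at w)"
proof -
  define A where "A = P + w *\<^sub>R Q"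
  define N where "N = matrix_inv A"
  have A: "invertible A" unfolding A_def by (fact assms)
  have shift: "P + (w + h) *\<^sub>R Q = A + h *\<^sub>R Q" for h
    unfolding A_def by (simp add: scaleR_add_left algebra_simps)
  obtain e where e: "0 < e" "\<And>h. \<bar>h\<bar> < e \<Longrightarrow> invertible (A + h *\<^sub>R Q)"
    using invertible_affine_perturbation[OF A] by metis
  have "((\<lambda>h. N ** Q ** (N - matrix_inv (A + h *\<^sub>R Q))) \<longlongrightarrow> N ** Q ** (N - N)) (at 0)"
    unfolding N_def by (intro tendsto_matrix_mult_left tendsto_intros tendsto_matrix_inv_affine A)
  then have "((\<lambda>h. norm (N ** Q ** (N - matrix_inv (A + h *\<^sub>R Q)))) \<longlongrightarrow> 0) (at 0)"
    using tendsto_norm by fastforce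
  moreover have "\<forall>\<^sub>F h in at 0. norm (N ** Q ** (N - matrix_inv (A + h *\<^sub>R Q))) =
      norm (matrix_inv (P + (w + h) *\<^sub>R Q) - matrix_inv (P + w *\<^sub>R Q) - h *\<^sub>R - (N ** Q ** N)) / norm h"
    unfolding eventually_at
  proof (intro exI[of _ e] conjI ballI impI)
    fix h :: real
    assume "h \<noteq> 0 \<and> dist h 0 < e"
    then have h: "\<bar>h\<bar> < e" "h \<noteq> 0" by auto
    have "matrix_inv (P + (w + h) *\<^sub>R Q) - matrix_inv (P + w *\<^sub>R Q) - h *\<^sub>R - (N ** Q ** N) =
        h *\<^sub>R (N ** Q ** (N - matrix_inv (A + h *\<^sub>R Q)))"
      unfolding shift A_def[symmetric] N_def
      by (subst matrix_inv_affine_perturbation[OF A e(2)[OF h(1)]])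
        (simp add: matrix_diff_ldistrib algebra_simps)
    then show "norm (N ** Q ** (N - matrix_inv (A + h *\<^sub>R Q))) =
        norm (matrix_inv (P + (w + h) *\<^sub>R Q) - matrix_inv (P + w *\<^sub>R Q) - h *\<^sub>R - (N ** Q ** N)) / norm h"
      using h(2) by simp
  qed (rule e(1))
  ultimately have "((\<lambda>h. norm (matrix_inv (P + (w + h) *\<^sub>R Q) - matrix_inv (P + w *\<^sub>R Q)
      - h *\<^sub>R - (N ** Q ** N)) / norm h) \<longlongrightarrow> 0) (at 0)"
    by (rule Lim_transform_eventually)
  then show ?thesis
    unfolding has_vector_derivative_def has_derivative_at N_def A_def
    by (simp add: bounded_linear_minus[OF bounded_linear_scaleR_left])
qed

lemma H_SCI_has_vector_derivative:
  assumes pd: "sym_pos_def PA" "sym_pos_def PB" "sym_pos_def QA" "sym_pos_def QB"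
    and w: "0 \<le> w" "w \<le> 1"
  defines "NA \<equiv> matrix_inv (PA + w *\<^sub>R QA)" and "NB \<equiv> matrix_inv (PB + (1 - w) *\<^sub>R QB)"
  shows "(H_SCI PA QA PB QB has_vector_derivative
           NA - w *\<^sub>R (NA ** QA ** NA) - NB + (1 - w) *\<^sub>R (NB ** QB ** NB)) (at w)"
proof -
  have B_affine: "PB + (1 - v) *\<^sub>R QB = (PB + QB) + v *\<^sub>R (- QB)" for v :: real
    by (simp add: scaleR_diff_left algebra_simps)
  have invA: "invertible (PA + w *\<^sub>R QA)" and invB: "invertible ((PB + QB) + w *\<^sub>R (- QB))"
    using pd w unfolding B_affine[symmetric]
    by (auto intro!: sym_pos_def_invertible sym_pos_def_add_scaleR)
  have dA: "((\<lambda>v. matrix_inv (PA + v *\<^sub>R QA)) has_vector_derivative - (NA ** QA ** NA)) (at w)"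
    unfolding NA_def by (rule has_vector_derivative_matrix_inv_affine[OF invA])
  have dB: "((\<lambda>v. matrix_inv (PB + (1 - v) *\<^sub>R QB)) has_vector_derivative NB ** QB ** NB) (at w)"
    using has_vector_derivative_matrix_inv_affine[OF invB]
    unfolding NB_def B_affine by (simp add: matrix_mult_uminus_right matrix_mult_uminus_left)
  have "((\<lambda>v. v *\<^sub>R matrix_inv (PA + v *\<^sub>R QA) + (1 - v) *\<^sub>R matrix_inv (PB + (1 - v) *\<^sub>R QB))
      has_vector_derivative NA - w *\<^sub>R (NA ** QA ** NA) - NB + (1 - w) *\<^sub>R (NB ** QB ** NB)) (at w)"
    by (rule derivative_eq_intros dA dB | simp add: NA_def NB_def)+
  then show ?thesis unfolding H_SCI_def[abs_def] .
qed

lemma H_SCI'_quadratic_form: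
  assumes pd: "sym_pos_def PA" "sym_pos_def PB" "sym_pos_def QA" "sym_pos_def QB"
    and w: "0 \<le> w" "w \<le> 1"
  shows "x \<bullet> (H_SCI' PA QA PB QB w *v x) =
           resolvent_energy PA QA x w - resolvent_energy PB QB x (1 - w)"
proof -
  define NA where "NA = matrix_inv (PA + w *\<^sub>R QA)"
  define NB where "NB = matrix_inv (PB + (1 - w) *\<^sub>R QB)"
  have pdA: "sym_pos_def (PA + w *\<^sub>R QA)" and pdB: "sym_pos_def (PB + (1 - w) *\<^sub>R QB)"
    using pd w by (auto intro: sym_pos_def_add_scaleR)
  have symA: "transpose NA = NA" and symB: "transpose NB = NB"
    unfolding NA_def NB_def using pdA pdB
    by (auto intro: matrix_inv_symmetric sym_pos_def_invertible sym_pos_def_symmetric)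
  have H': "H_SCI' PA QA PB QB w = NA - w *\<^sub>R (NA ** QA ** NA) - NB + (1 - w) *\<^sub>R (NB ** QB ** NB)"
    unfolding H_SCI'_def NA_def NB_def
    by (rule vector_derivative_at[OF H_SCI_has_vector_derivative[OF pd w]])
  have sandwich: "x \<bullet> ((N ** R ** N) *v x) = (N *v x) \<bullet> (R *v (N *v x))" if "transpose N = N" for N R
    using inner_matrix_vector_transpose[of x N "R *v (N *v x)"] that
    by (simp add: matrix_vector_mul_assoc matrix_mul_assoc)
  have "x \<bullet> (H_SCI' PA QA PB QB w *v x) =
      (x \<bullet> (NA *v x) - w * ((NA *v x) \<bullet> (QA *v (NA *v x))))
      - (x \<bullet> (NB *v x) - (1 - w) * ((NB *v x) \<bullet> (QB *v (NB *v x))))"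
    unfolding H' using sandwich[OF symA] sandwich[OF symB]
    by (simp add: matrix_vector_mult_diff_rdistrib matrix_vector_mult_add_rdistrib
        matrix_vector_mult_scaleR_left inner_diff_right inner_add_right)
  also have "\<dots> = resolvent_energy PA QA x w - resolvent_energy PB QB x (1 - w)"
    unfolding resolvent_energy_def NA_def[symmetric] NB_def[symmetric]
    using inner_eq_if_solves[OF sym_pos_def_solve[OF pdA], of x]
      inner_eq_if_solves[OF sym_pos_def_solve[OF pdB], of x]
    by (simp add: NA_def NB_def inner_commute)
  finally show ?thesis .
qed

lemma H_SCI_quadratic_form_has_derivative:
  fixes PA PB QA QB :: "real^'n::finite^'n"
  assumes "sym_pos_def PA" "sym_pos_def PB" "sym_pos_def QA" "sym_pos_def QB" "0 \<le> w" "w \<le> 1"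
  shows "((\<lambda>w. x \<bullet> (H_SCI PA QA PB QB w *v x)) has_real_derivative
           x \<bullet> (H_SCI' PA QA PB QB w *v x)) (at w)"
proof -
  have "linear (\<lambda>M::real^'n^'n. x \<bullet> (M *v x))"
    by (rule linearI) (simp_all add: matrix_vector_mult_add_rdistrib matrix_vector_mult_scaleR_left
        inner_add_right)
  then have "bounded_linear (\<lambda>M::real^'n^'n. x \<bullet> (M *v x))"
    by (simp add: linear_conv_bounded_linear)
  moreover have "(H_SCI PA QA PB QB has_vector_derivative H_SCI' PA QA PB QB w) (at w)"
    using H_SCI_has_vector_derivative[OF assms] unfolding H_SCI'_def by (simp add: vector_derivative_at)
  ultimately show ?thesis
    unfolding has_real_derivative_iff_has_vector_derivative by (rule bounded_linear.has_vector_derivative)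
qed

text \<open>With \<open>y\<^sub>w = (P + w Q)\<^sup>-\<^sup>1 x\<close>, \<open>z = y\<^sub>w\<^sub>'\<close>, \<open>e = y\<^sub>w - z\<close>, \<open>\<delta> = w' - w\<close> and \<open>u = \<delta> z - w e\<close>,
  one has \<open>\<delta> (y\<^sub>w\<^sup>T P y\<^sub>w - z\<^sup>T P z) = 2 u\<^sup>T Q u + (2 w + \<delta>) e\<^sup>T P e\<close>.\<close>
lemma resolvent_energy_strict_decreasing:
  assumes P: "sym_pos_def P" and Q: "sym_pos_def Q" and x: "x \<noteq> 0" and w: "0 \<le> w" "w < w'"
  shows "resolvent_energy P Q x w' < resolvent_energy P Q x w"
proof -
  define z where "z = matrix_inv (P + w' *\<^sub>R Q) *v x"
  define e where "e = matrix_inv (P + w *\<^sub>R Q) *v x - z"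
  define \<delta> where "\<delta> = w' - w"
  define u where "u = \<delta> *\<^sub>R z - w *\<^sub>R e"
  have \<delta>: "0 < \<delta>" unfolding \<delta>_def using w by simp
  have ez: "(P + w' *\<^sub>R Q) *v z = x" unfolding z_def using P Q w
    by (intro sym_pos_def_solve sym_pos_def_add_scaleR) auto
  have y: "matrix_inv (P + w *\<^sub>R Q) *v x = z + e" unfolding e_def by simp
  have eze: "(P + w *\<^sub>R Q) *v (z + e) = x" unfolding y[symmetric] using P Q w
    by (intro sym_pos_def_solve sym_pos_def_add_scaleR) auto
  have "P *v e + w *\<^sub>R (Q *v e) = (P + w *\<^sub>R Q) *v (z + e) - (P + w' *\<^sub>R Q) *v z + \<delta> *\<^sub>R (Q *v z)"
    by (simp add: \<delta>_def algebra_simps matrix_vector_mult_scaleR_left)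
  then have ee: "P *v e + w *\<^sub>R (Q *v e) = \<delta> *\<^sub>R (Q *v z)"
    by (simp add: eze ez)
  have symP: "\<And>a b. a \<bullet> (P *v b) = b \<bullet> (P *v a)" and symQ: "\<And>a b. a \<bullet> (Q *v b) = b \<bullet> (Q *v a)"
    using P Q by (auto intro: inner_symmetric_matrix_commute sym_pos_def_symmetric)
  have i: "z \<bullet> (P *v e) + w * (z \<bullet> (Q *v e)) = \<delta> * (z \<bullet> (Q *v z))"
    using arg_cong[OF ee, of "\<lambda>v. z \<bullet> v"] by (simp add: inner_add_right)
  have ii: "e \<bullet> (P *v e) + w * (e \<bullet> (Q *v e)) = \<delta> * (z \<bullet> (Q *v e))"
    using arg_cong[OF ee, of "\<lambda>v. e \<bullet> v"] symQ[of e z] by (simp add: inner_add_right)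
  have diff: "resolvent_energy P Q x w - resolvent_energy P Q x w' = 2 * (z \<bullet> (P *v e)) + e \<bullet> (P *v e)"
    unfolding resolvent_energy_def y z_def[symmetric]
    using symP[of e z] by (simp add: algebra_simps)
  have uQu: "u \<bullet> (Q *v u) = \<delta>\<^sup>2 * (z \<bullet> (Q *v z)) - 2 * \<delta> * w * (z \<bullet> (Q *v e)) + w\<^sup>2 * (e \<bullet> (Q *v e))"
    unfolding u_def using symQ[of e z]
    by (simp add: algebra_simps matrix_vector_mult_scaleR power2_eq_square)
  have key: "\<delta> * (2 * (z \<bullet> (P *v e)) + e \<bullet> (P *v e)) = 2 * (u \<bullet> (Q *v u)) + (2 * w + \<delta>) * (e \<bullet> (P *v e))"
    unfolding uQu using i ii by algebra
  have "e \<noteq> 0"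
  proof
    assume "e = 0"
    then have "Q *v z = 0" using ee \<delta> by simp
    then have "z = 0" using sym_pos_def_pos[OF Q, of z] by (cases "z = 0") auto
    then show False using ez x by simp
  qed
  then have "0 < \<delta> * (2 * (z \<bullet> (P *v e)) + e \<bullet> (P *v e))"
    unfolding key using sym_pos_def_pos[OF P, of e] sym_pos_def_nonneg[OF Q, of u] w \<delta>
    by (simp add: add_nonneg_pos)
  then show ?thesis using \<delta> diff by (simp add: zero_less_mult_iff)
qed

section \<open>Maximisation over the unit interval\<close>

lemma exists_kkt_point:
  fixes h d :: "real \<Rightarrow> real"
  assumes deriv: "\<And>w. w \<in> {0..1} \<Longrightarrow> (h has_real_derivative d w) (at w)"
  obtains w where "w \<in> {0..1}" "0 < w \<Longrightarrow> 0 \<le> d w" "w < 1 \<Longrightarrow> d w \<le> 0"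
proof -
  have "continuous_on {0..1} h"
    using deriv by (meson DERIV_isCont continuous_at_imp_continuous_on)
  then obtain w where w: "w \<in> {0..1}" and max: "\<And>v. v \<in> {0..1} \<Longrightarrow> h v \<le> h w"
    using continuous_attains_sup[of "{0..1::real}" h] by auto
  have "0 \<le> d w" if "0 < w"
  proof (rule ccontr)
    assume "\<not> 0 \<le> d w"
    then obtain e where e: "0 < e" "\<And>t. 0 < t \<Longrightarrow> t < e \<Longrightarrow> h w < h (w - t)"
      using DERIV_neg_dec_left[OF deriv[OF w]] by force
    then have "h w < h (w - min (e / 2) w)" using that by simp
    moreover have "w - min (e / 2) w \<in> {0..1}" using w e(1) that by (auto simp: min_def)
    ultimately show False using max by fastforce
  qed
  moreover have "d w \<le> 0" if "w < 1"
  proof (rule ccontr)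
    assume "\<not> d w \<le> 0"
    then obtain e where e: "0 < e" "\<And>t. 0 < t \<Longrightarrow> t < e \<Longrightarrow> h w < h (w + t)"
      using DERIV_pos_inc_right[OF deriv[OF w]] by force
    then have "h w < h (w + min (e / 2) (1 - w))" using that by simp
    moreover have "w + min (e / 2) (1 - w) \<in> {0..1}" using w e(1) that by (auto simp: min_def)
    ultimately show False using max by fastforce
  qed
  ultimately show ?thesis using that w by blast
qed

lemma kkt_trichotomy:
  fixes d :: "real \<Rightarrow> real"
  assumes anti: "strict_antimono_on {0..1} d"
    and w: "w \<in> {0..1}" "0 < w \<Longrightarrow> 0 \<le> d w" "w < 1 \<Longrightarrow> d w \<le> 0"
  defines "unique_zero \<equiv> \<exists>!w\<^sub>0. w\<^sub>0 \<in> {0..1} \<and> d w\<^sub>0 = 0"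
  shows "(d 0 < 0 \<and> \<not> d 1 > 0 \<and> \<not> unique_zero) \<or> (\<not> d 0 < 0 \<and> d 1 > 0 \<and> \<not> unique_zero)
           \<or> (\<not> d 0 < 0 \<and> \<not> d 1 > 0 \<and> unique_zero)"
proof -
  have less: "d v < d u" if "u \<in> {0..1}" "v \<in> {0..1}" "u < v" for u v
    using anti that by (auto simp: monotone_on_def)
  have le: "d v \<le> d u" if "u \<in> {0..1}" "v \<in> {0..1}" "u \<le> v" for u v
    using less[OF that(1,2)] that(3) by (cases "u = v") auto
  consider "d 0 < 0" | "d 1 > 0" | "0 \<le> d 0" "d 1 \<le> 0" by linarith
  then show ?thesis
  proof cases
    case 1
    have neg: "d v < 0" if "v \<in> {0..1}" for v
      using le[of 0 v] that 1 by simp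
    have "d 1 < 0" by (rule neg) simp
    moreover have "\<not> unique_zero"
    proof
      assume unique_zero
      then obtain v where v: "v \<in> {0..1}" "d v = 0" unfolding unique_zero_def by blast
      with neg[OF v(1)] show False by linarith
    qed
    ultimately show ?thesis using 1 by auto
  next
    case 2
    have pos: "0 < d v" if "v \<in> {0..1}" for v
      using le[of v 1] that 2 by simp
    have "0 < d 0" by (rule pos) simp
    moreover have "\<not> unique_zero"
    proof
      assume unique_zero
      then obtain v where v: "v \<in> {0..1}" "d v = 0" unfolding unique_zero_def by blast
      with pos[OF v(1)] show False by linarith
    qed
    ultimately show ?thesis using 2 by auto
  next
    case 3
    have "d w = 0"
      using w 3 by (cases "w = 0"; cases "w = 1") auto
    moreover have "v = w" if "v \<in> {0..1}" "d v = 0" for v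
      using less[of v w] less[of w v] that w(1) \<open>d w = 0\<close> by (cases v w rule: linorder_cases) auto
    ultimately have unique_zero
      unfolding unique_zero_def using w(1) by blast
    with 3 show ?thesis by simp
  qed
qed

theorem theorem2:
  fixes PA PB QA QB :: "real ^ 'n ^ 'n" and x :: "real ^ 'n"
  assumes "sym_pos_def PA" "sym_pos_def PB" "sym_pos_def QA" "sym_pos_def QB"
    and "x \<noteq> 0"
  shows "let d = (\<lambda>w. x \<bullet> (H_SCI' PA QA PB QB w *v x));
             h = (\<lambda>w. x \<bullet> (H_SCI PA QA PB QB w *v x));
             c1 = (d 0 < 0); c2 = (d 1 > 0);
             c3 = (\<exists>!w0. w0 \<in> {0..1} \<and> d w0 = 0)
         in ((c1 \<and> \<not> c2 \<and> \<not> c3) \<or> (\<not> c1 \<and> c2 \<and> \<not> c3) \<or> (\<not> c1 \<and> \<not> c2 \<and> c3))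
            \<and> (c1 \<longrightarrow> g_fun PA QA PB QB x = h 0)
            \<and> (c2 \<longrightarrow> g_fun PA QA PB QB x = h 1)
            \<and> (\<forall>w0. c3 \<and> w0 \<in> {0..1} \<and> d w0 = 0 \<longrightarrow> g_fun PA QA PB QB x = h w0)"
proof -
  note pd = assms(1-4)
  define d where "d w = x \<bullet> (H_SCI' PA QA PB QB w *v x)" for w
  define h where "h w = x \<bullet> (H_SCI PA QA PB QB w *v x)" for w
  have d_eq: "d w = resolvent_energy PA QA x w - resolvent_energy PB QB x (1 - w)" if "w \<in> {0..1}" for w
    unfolding d_def using H_SCI'_quadratic_form[OF pd] that by simp
  have anti: "strict_antimono_on {0..1} d"
    using resolvent_energy_strict_decreasing[OF assms(1,3,5)] resolvent_energy_strict_decreasing[OF assms(2,4,5)]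
    by (auto simp: monotone_on_def d_eq intro: diff_strict_mono)
  have g_eq: "g_fun PA QA PB QB x = h w"
    if "w \<in> {0..1}" "0 < w \<Longrightarrow> 0 \<le> d w" "w < 1 \<Longrightarrow> d w \<le> 0" for w
    using that g_fun_eq_H_SCI_if_kkt[OF assms, of w] by (simp add: d_eq h_def)
  obtain w where w: "w \<in> {0..1}" "0 < w \<Longrightarrow> 0 \<le> d w" "w < 1 \<Longrightarrow> d w \<le> 0"
    using exists_kkt_point[of h d] H_SCI_quadratic_form_has_derivative[OF pd] unfolding d_def h_def
    by (metis atLeastAtMost_iff)
  have "d 0 < 0 \<Longrightarrow> g_fun PA QA PB QB x = h 0" by (rule g_eq) auto
  moreover have "d 1 > 0 \<Longrightarrow> g_fun PA QA PB QB x = h 1" by (rule g_eq) auto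
  moreover have "w\<^sub>0 \<in> {0..1} \<Longrightarrow> d w\<^sub>0 = 0 \<Longrightarrow> g_fun PA QA PB QB x = h w\<^sub>0" for w\<^sub>0
    by (rule g_eq) auto
  ultimately show ?thesis
    using kkt_trichotomy[OF anti w] unfolding Let_def d_def[symmetric] h_def[symmetric] by blast
qed

end
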